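(* Let $p\ge 2$ and let $(E_n)$ be a sequence of convex and compact subsets of $\mathbb{R}^p$. Assume that $F_n:=\partial E_n$ converges in the Painlevé–Kuratowski sense to a compact nonempty set $F$. Then $E_n$ converges in the Painlevé–Kuratowski sense to $E:=\mathrm{conv}\,F$, and $\partial E=F$.
   Context: For subsets $A_n$ of $\mathbb{R}^p$, $\liminf A_n$ is the set of limits of sequences $x_n\in A_n$, $\limsup A_n$ is the set of limits of sequences $x_{n_k}\in A_{n_k}$ along some $n_1<n_2<\dots$, and $A_n\to A$ in the Painlevé–Kuratowski sense if $\liminf A_n=\limsup A_n=A$. $\partial$ denotes the topological boundary in $\mathbb{R}^p$ and $\mathrm{conv}$ the convex hull. *)

theory Defs
  imports "HOL-Analysis.Analysis"
begin

definition PK_liminf :: "(nat \<Rightarrow> 'a::metric_space set) \<Rightarrow> 'a set" where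
  "PK_liminf A = {x. \<exists>u. (\<forall>n. u n \<in> A n) \<and> u \<longlonglongrightarrow> x}"

definition PK_limsup :: "(nat \<Rightarrow> 'a::metric_space set) \<Rightarrow> 'a set" where
  "PK_limsup A = {x. \<exists>r u. strict_mono r \<and> (\<forall>k. u k \<in> A (r k)) \<and> u \<longlonglongrightarrow> x}"

definition PK_converges :: "(nat \<Rightarrow> 'a::metric_space set) \<Rightarrow> 'a set \<Rightarrow> bool" where
  "PK_converges A S \<longleftrightarrow> PK_liminf A = S \<and> PK_limsup A = S"

end

theory Submission imports Defs begin

text \<open>
  By Krein-Milman, each \<open>E\<^sub>n\<close> is the convex hull of its frontier. For \<open>p \<ge> 2\<close> these
  frontiers are connected, so once one of their points stays near a point of \<open>F\<close> they cannot
  escape to infinity without producing an upper limit point far away; hence they eventually lie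
  in a fixed ball, and compactness then puts them, and so also \<open>E\<^sub>n\<close>, eventually inside
  every open convex neighbourhood of \<open>K = conv F\<close>. Separating points from \<open>K\<close> by
  hyperplanes gives \<open>lim sup E\<^sub>n \<subseteq> K\<close>, while \<open>K \<subseteq> lim inf E\<^sub>n\<close> since a lower limit of
  convex sets is convex. Limits of supporting hyperplanes of \<open>E\<^sub>n\<close> at points converging to
  \<open>x \<in> F\<close> support \<open>K\<close> at \<open>x\<close>, so \<open>F \<subseteq> \<partial>K\<close>; conversely, for \<open>x \<in> \<partial>K\<close> the segment from a
  point of \<open>E\<^sub>n\<close> near \<open>x\<close> to a point outside \<open>K\<close> near \<open>x\<close> crosses \<open>\<partial>E\<^sub>n\<close>.
\<close>

lemma PK_liminf_subset_PK_limsup: "PK_liminf A \<subseteq> PK_limsup A"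
  unfolding PK_liminf_def PK_limsup_def
  by (auto intro!: exI[of _ id] simp: strict_mono_id)

lemma PK_liminf_mono:
  assumes "\<And>n. A n \<subseteq> B n"
  shows "PK_liminf A \<subseteq> PK_liminf B"
  using assms unfolding PK_liminf_def by blast

lemma convex_PK_liminf:
  fixes A :: "nat \<Rightarrow> 'a::real_normed_vector set"
  assumes "\<And>n. convex (A n)"
  shows "convex (PK_liminf A)"
  unfolding convex_def PK_liminf_def
proof clarsimp
  fix u w x y and a b :: real
  assume "\<forall>n. u n \<in> A n" "u \<longlonglongrightarrow> x" "\<forall>n. w n \<in> A n" "w \<longlonglongrightarrow> y" "0 \<le> a" "0 \<le> b" "a + b = 1"
  then show "\<exists>v. (\<forall>n. v n \<in> A n) \<and> v \<longlonglongrightarrow> a *\<^sub>R x + b *\<^sub>R y"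
    using assms unfolding convex_def
    by (intro exI[of _ "\<lambda>n. a *\<^sub>R u n + b *\<^sub>R w n"] conjI tendsto_intros) auto
qed

lemma PK_liminfI:
  fixes A :: "nat \<Rightarrow> 'a::metric_space set"
  assumes nonempty: "\<And>n. A n \<noteq> {}"
    and near: "\<And>\<epsilon>. \<epsilon> > 0 \<Longrightarrow> eventually (\<lambda>n. \<exists>w\<in>A n. dist w x < \<epsilon>) sequentially"
  shows "x \<in> PK_liminf A"
proof -
  define \<delta> where "\<delta> = (\<lambda>n. infdist x (A n) + 1 / (real n + 1))"
  have "\<exists>w\<in>A n. dist w x < \<delta> n" for n
  proof -
    have "infdist x (A n) < \<delta> n" by (simp add: \<delta>_def)
    then show ?thesis
      using nonempty[of n] cInf_lessD[of "dist x ` A n"] by (auto simp: infdist_def dist_commute)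
  qed
  then obtain u where u: "\<And>n. u n \<in> A n" "\<And>n. dist (u n) x < \<delta> n" by metis
  have "(\<lambda>n. infdist x (A n)) \<longlonglongrightarrow> 0"
  proof (rule tendstoI)
    fix \<epsilon> :: real assume "\<epsilon> > 0"
    from near[OF this] show "eventually (\<lambda>n. dist (infdist x (A n)) 0 < \<epsilon>) sequentially"
    proof eventually_elim
      case (elim n)
      then obtain w where "w \<in> A n" "dist w x < \<epsilon>" by blast
      then have "infdist x (A n) < \<epsilon>"
        using infdist_le[of w "A n" x] by (simp add: dist_commute)
      then show ?case using infdist_nonneg[of x "A n"] by simp
    qed
  qed
  moreover have "(\<lambda>n. 1 / (real n + 1)) \<longlonglongrightarrow> 0"
    using LIMSEQ_inverse_real_of_nat by (simp add: inverse_eq_divide add.commute)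
  ultimately have "\<delta> \<longlonglongrightarrow> 0"
    unfolding \<delta>_def by (rule tendsto_add_zero)
  then have "(\<lambda>n. dist (u n) x) \<longlonglongrightarrow> 0"
    by (rule tendsto_sandwich[of "\<lambda>_. 0" _ _ \<delta>, rotated 3]) (simp_all add: less_imp_le[OF u(2)])
  then have "u \<longlonglongrightarrow> x"
    by (rule tendsto_dist_iff[THEN iffD2])
  then show ?thesis unfolding PK_liminf_def using u(1) by blast
qed

lemma PK_limsup_subset_closed:
  assumes "eventually (\<lambda>n. A n \<subseteq> S) sequentially" "closed S"
  shows "PK_limsup A \<subseteq> S"
proof
  fix x assume "x \<in> PK_limsup A"
  then obtain r u where r: "strict_mono r" and u: "\<And>k. u k \<in> A (r k)" "u \<longlonglongrightarrow> x"
    unfolding PK_limsup_def by blast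
  have "eventually (\<lambda>k. A (r k) \<subseteq> S) sequentially"
    using r assms(1) by (rule eventually_subseq)
  then have "eventually (\<lambda>k. u k \<in> S) sequentially"
    by eventually_elim (use u(1) in blast)
  then show "x \<in> S"
    using \<open>closed S\<close> u(2) by (intro Lim_in_closed_set[of S u]) auto
qed

lemma eventually_disjoint_compact_if_PK_limsup:
  fixes A :: "nat \<Rightarrow> 'a::metric_space set"
  assumes "compact C" "PK_limsup A \<inter> C = {}"
  shows "eventually (\<lambda>n. A n \<inter> C = {}) sequentially"
proof (rule ccontr)
  assume "\<not> ?thesis"
  then obtain r :: "nat \<Rightarrow> nat" where r: "strict_mono r" "\<And>k. A (r k) \<inter> C \<noteq> {}"
    using not_eventually_sequentiallyD by blast
  then have "\<forall>k. \<exists>w. w \<in> A (r k) \<and> w \<in> C" by blast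
  then obtain v where v: "\<forall>k. v k \<in> A (r k)" "\<forall>k. v k \<in> C" by (metis choice)
  obtain l s where "l \<in> C" "strict_mono s" "(v \<circ> s) \<longlonglongrightarrow> l"
    using compact_imp_seq_compact[OF \<open>compact C\<close>] v(2) by (rule seq_compactE)
  moreover have "l \<in> PK_limsup A"
    unfolding PK_limsup_def
  proof (intro CollectI exI conjI)
    show "strict_mono (r \<circ> s)" using r(1) \<open>strict_mono s\<close> by (rule strict_mono_o)
    show "\<forall>k. (v \<circ> s) k \<in> A ((r \<circ> s) k)" using v(1) by simp
  qed fact
  ultimately show False using assms(2) by blast
qed

lemma eventually_connected_subset_cball:
  fixes A :: "nat \<Rightarrow> 'a::euclidean_space set"
  assumes connected: "\<And>n. connected (A n)"
    and "PK_liminf A \<noteq> {}" "bounded (PK_limsup A)"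
  obtains R where "eventually (\<lambda>n. A n \<subseteq> cball 0 R) sequentially"
proof -
  obtain x u where u: "\<And>n. u n \<in> A n" "u \<longlonglongrightarrow> x"
    using assms(2) unfolding PK_liminf_def by blast
  obtain r where "PK_limsup A \<subseteq> ball 0 r"
    using bounded_subset_ballD[OF assms(3)] by blast
  define R where "R = max r (norm x + 1)"
  have "PK_limsup A \<inter> sphere 0 R = {}"
    using \<open>PK_limsup A \<subseteq> ball 0 r\<close> by (auto simp: R_def)
  then have "eventually (\<lambda>n. A n \<inter> sphere 0 R = {}) sequentially"
    by (intro eventually_disjoint_compact_if_PK_limsup) auto
  moreover have "eventually (\<lambda>n. norm (u n) < R) sequentially"
    using tendsto_norm[OF u(2)] by (rule order_tendstoD) (simp add: R_def)
  ultimately have "eventually (\<lambda>n. A n \<subseteq> cball 0 R) sequentially"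
  proof eventually_elim
    case (elim n)
    show ?case
    proof (rule ccontr)
      assume "\<not> A n \<subseteq> cball 0 R"
      moreover have "A n \<inter> cball 0 R \<noteq> {}" using u(1)[of n] elim by auto
      ultimately have "A n \<inter> frontier (cball 0 R) \<noteq> {}"
        using connected_Int_frontier[OF connected] by blast
      then show False using elim by simp
    qed
  qed
  then show ?thesis by (rule that)
qed

lemma eventually_subset_open_if_PK_limsup:
  fixes A :: "nat \<Rightarrow> 'a::euclidean_space set"
  assumes "\<And>n. connected (A n)" "PK_liminf A \<noteq> {}" "bounded (PK_limsup A)"
    and "open U" "PK_limsup A \<subseteq> U"
  shows "eventually (\<lambda>n. A n \<subseteq> U) sequentially"
proof -
  obtain R where "eventually (\<lambda>n. A n \<subseteq> cball 0 R) sequentially"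
    using eventually_connected_subset_cball assms(1-3) by blast
  moreover have "eventually (\<lambda>n. A n \<inter> (cball 0 R - U) = {}) sequentially"
    using assms(4,5) by (intro eventually_disjoint_compact_if_PK_limsup compact_diff) auto
  ultimately show ?thesis by eventually_elim blast
qed

lemma eventually_subset_open_convex_if_PK_limsup_frontier:
  fixes E :: "nat \<Rightarrow> 'a::euclidean_space set"
  assumes "DIM('a) \<ge> 2" "\<And>n. convex (E n)" "\<And>n. compact (E n)"
    and "PK_liminf (\<lambda>n. frontier (E n)) \<noteq> {}" "bounded (PK_limsup (\<lambda>n. frontier (E n)))"
    and "open U" "convex U" "PK_limsup (\<lambda>n. frontier (E n)) \<subseteq> U"
  shows "eventually (\<lambda>n. E n \<subseteq> U) sequentially"
proof -
  have "connected (frontier (E n))" for n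
    using assms(1-3) by (intro connected_frontier_simple convex_connected
        connected_complement_bounded_convex compact_imp_bounded)
  then have "eventually (\<lambda>n. frontier (E n) \<subseteq> U) sequentially"
    using assms(4-8) by (intro eventually_subset_open_if_PK_limsup)
  then show ?thesis
    by eventually_elim (metis Krein_Milman_frontier assms(2,3) \<open>convex U\<close> hull_minimal)
qed

lemma PK_limsup_subset_if_eventually_subset_open_convex:
  fixes E :: "nat \<Rightarrow> 'a::euclidean_space set"
  assumes "closed K" "convex K"
    and inside: "\<And>U. open U \<Longrightarrow> convex U \<Longrightarrow> K \<subseteq> U \<Longrightarrow> eventually (\<lambda>n. E n \<subseteq> U) sequentially"
  shows "PK_limsup E \<subseteq> K"
proof
  fix x assume x: "x \<in> PK_limsup E"
  show "x \<in> K"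
  proof (rule ccontr)
    assume "x \<notin> K"
    then obtain a b where ab: "a \<bullet> x < b" "\<forall>y\<in>K. b < a \<bullet> y"
      using separating_hyperplane_closed_point assms(1,2) by blast
    have "eventually (\<lambda>n. E n \<subseteq> {y. b < a \<bullet> y}) sequentially"
      using ab(2) by (intro inside open_halfspace_gt convex_halfspace_gt) auto
    then have "eventually (\<lambda>n. E n \<subseteq> {y. b \<le> a \<bullet> y}) sequentially"
      by eventually_elim auto
    then have "PK_limsup E \<subseteq> {y. b \<le> a \<bullet> y}"
      using closed_halfspace_ge by (rule PK_limsup_subset_closed)
    then show False using x ab(1) by auto
  qed
qed

lemma eventually_not_mem_if_eventually_subset_open_convex:
  fixes E :: "nat \<Rightarrow> 'a::euclidean_space set"
  assumes "closed K" "convex K" "z \<notin> K"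
    and inside: "\<And>U. open U \<Longrightarrow> convex U \<Longrightarrow> K \<subseteq> U \<Longrightarrow> eventually (\<lambda>n. E n \<subseteq> U) sequentially"
  shows "eventually (\<lambda>n. z \<notin> E n) sequentially"
proof -
  obtain a b where ab: "a \<bullet> z < b" "\<forall>y\<in>K. b < a \<bullet> y"
    using separating_hyperplane_closed_point assms(1-3) by blast
  have "eventually (\<lambda>n. E n \<subseteq> {y. b < a \<bullet> y}) sequentially"
    using ab(2) by (intro inside open_halfspace_gt convex_halfspace_gt) auto
  then show ?thesis by eventually_elim (use ab(1) in auto)
qed

lemma supporting_hyperplane_frontier:
  fixes S :: "'a::euclidean_space set"
  assumes "convex S" "closed S" "x \<in> frontier S"
  obtains a where "norm a = 1" "\<And>y. y \<in> S \<Longrightarrow> a \<bullet> x \<le> a \<bullet> y"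
proof -
  obtain a where a: "a \<noteq> 0" "\<And>y. y \<in> S \<Longrightarrow> a \<bullet> x \<le> a \<bullet> y"
  proof (cases "interior S = {}")
    case True
    then obtain a b where "a \<noteq> 0" "S \<subseteq> {y. a \<bullet> y = b}"
      using empty_interior_subset_hyperplane assms(1) by metis
    moreover have "x \<in> S" using assms(2,3) frontier_subset_closed by blast
    ultimately show ?thesis by (intro that[of a]) (auto simp: subset_eq)
  next
    case False
    then have "x \<in> closure S" "x \<notin> rel_interior S"
      using assms(3) by (auto simp: frontier_def rel_interior_nonempty_interior)
    then show ?thesis
      using supporting_hyperplane_relative_frontier[OF assms(1)] that closure_closed[OF assms(2)]
      by metis
  qed
  show ?thesis
  proof (rule that[of "a /\<^sub>R norm a"])
    show "norm (a /\<^sub>R norm a) = 1" using a(1) by simp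
    show "(a /\<^sub>R norm a) \<bullet> x \<le> (a /\<^sub>R norm a) \<bullet> y" if "y \<in> S" for y
      using a(2)[OF that] by (simp add: mult_left_mono)
  qed
qed

lemma PK_liminf_frontier_disjoint_interior_PK_liminf:
  fixes E :: "nat \<Rightarrow> 'a::euclidean_space set"
  assumes "\<And>n. convex (E n)" "\<And>n. closed (E n)"
  shows "PK_liminf (\<lambda>n. frontier (E n)) \<inter> interior (PK_liminf E) = {}"
proof -
  have "x \<notin> interior (PK_liminf E)"
    if u: "\<And>n. u n \<in> frontier (E n)" "u \<longlonglongrightarrow> x" for u x
  proof -
    have "\<exists>a. norm a = 1 \<and> (\<forall>y\<in>E n. a \<bullet> u n \<le> a \<bullet> y)" for n
      using supporting_hyperplane_frontier[OF assms u(1)] by metis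
    then obtain a where a: "\<And>n. a n \<in> sphere 0 1" "\<And>n y. y \<in> E n \<Longrightarrow> a n \<bullet> u n \<le> a n \<bullet> y"
      by (metis mem_sphere_0)
    obtain l s where l: "l \<in> sphere 0 1" and s: "strict_mono s" "(a \<circ> s) \<longlonglongrightarrow> l"
      using seq_compactE[OF compact_imp_seq_compact[OF compact_sphere]] a(1) by metis
    have "l \<bullet> x \<le> l \<bullet> y" if "y \<in> PK_liminf E" for y
    proof -
      obtain w where w: "\<And>n. w n \<in> E n" "w \<longlonglongrightarrow> y"
        using \<open>y \<in> PK_liminf E\<close> unfolding PK_liminf_def by blast
      have "(\<lambda>k. a (s k) \<bullet> u (s k)) \<longlonglongrightarrow> l \<bullet> x"
        using tendsto_inner[OF s(2) LIMSEQ_subseq_LIMSEQ[OF u(2) s(1)]] by (simp add: comp_def)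
      moreover have "(\<lambda>k. a (s k) \<bullet> w (s k)) \<longlonglongrightarrow> l \<bullet> y"
        using tendsto_inner[OF s(2) LIMSEQ_subseq_LIMSEQ[OF w(2) s(1)]] by (simp add: comp_def)
      ultimately show ?thesis by (rule LIMSEQ_le) (use a(2) w(1) in blast)
    qed
    then have "interior (PK_liminf E) \<subseteq> interior {y. l \<bullet> x \<le> l \<bullet> y}"
      by (intro interior_mono) blast
    also have "\<dots> = {y. l \<bullet> x < l \<bullet> y}"
      using l by (intro interior_halfspace_ge) auto
    finally show ?thesis by auto
  qed
  then show ?thesis unfolding PK_liminf_def by blast
qed

lemma frontier_subset_PK_liminf_frontier:
  fixes E :: "nat \<Rightarrow> 'a::real_normed_vector set"
  assumes "closed K" "K \<subseteq> PK_liminf E"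
    and outside: "\<And>z. z \<notin> K \<Longrightarrow> eventually (\<lambda>n. z \<notin> E n) sequentially"
    and "\<And>n. frontier (E n) \<noteq> {}"
  shows "frontier K \<subseteq> PK_liminf (\<lambda>n. frontier (E n))"
proof
  fix x assume x: "x \<in> frontier K"
  then have "x \<in> PK_liminf E"
    using assms(2) frontier_subset_closed[OF assms(1)] by blast
  then obtain y where y: "\<And>n. y n \<in> E n" "y \<longlonglongrightarrow> x"
    unfolding PK_liminf_def by blast
  show "x \<in> PK_liminf (\<lambda>n. frontier (E n))"
  proof (rule PK_liminfI[OF assms(4)])
    fix \<epsilon> :: real assume "\<epsilon> > 0"
    then obtain z where z: "z \<notin> K" "dist x z < \<epsilon>"
      using x frontier_straddle by metis
    have "eventually (\<lambda>n. z \<notin> E n \<and> dist (y n) x < \<epsilon>) sequentially"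
      using outside[OF z(1)] tendstoD[OF y(2) \<open>\<epsilon> > 0\<close>] by (rule eventually_conj)
    then show "eventually (\<lambda>n. \<exists>w\<in>frontier (E n). dist w x < \<epsilon>) sequentially"
    proof eventually_elim
      case (elim n)
      have "closed_segment (y n) z \<inter> frontier (E n) \<noteq> {}"
        using elim y(1)[of n] by (intro connected_Int_frontier connected_segment) auto
      moreover have "closed_segment (y n) z \<subseteq> ball x \<epsilon>"
        using elim z(2) by (intro closed_segment_subset) (auto simp: dist_commute)
      ultimately obtain w where "w \<in> frontier (E n)" "w \<in> ball x \<epsilon>"
        by blast
      then show ?case by (auto simp: dist_commute)
    qed
  qed
qed

theorem mainTheorem9:
  fixes E :: "nat \<Rightarrow> 'a::euclidean_space set" and F :: "'a set"
  assumes "DIM('a) \<ge> 2"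
    and "\<And>n. convex (E n)" and "\<And>n. compact (E n)"
    and "PK_converges (\<lambda>n. frontier (E n)) F"
    and "compact F" and "F \<noteq> {}"
  shows "PK_converges E (convex hull F) \<and> frontier (convex hull F) = F"
proof -
  define K where "K = convex hull F"
  have liminf_frontier: "PK_liminf (\<lambda>n. frontier (E n)) = F"
    and limsup_frontier: "PK_limsup (\<lambda>n. frontier (E n)) = F"
    using assms(4) by (simp_all add: PK_converges_def)
  have "closed K" "convex K" "F \<subseteq> K"
    unfolding K_def using assms(5) by (simp_all add: compact_imp_closed compact_convex_hull hull_subset)
  have E_closed: "closed (E n)" for n
    using assms(3) by (rule compact_imp_closed)
  have frontier_nonempty: "frontier (E n) \<noteq> {}" for n
    using assms(6) liminf_frontier unfolding PK_liminf_def by blast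
  have inside: "eventually (\<lambda>n. E n \<subseteq> U) sequentially" if "open U" "convex U" "K \<subseteq> U" for U
    using that \<open>F \<subseteq> K\<close> compact_imp_bounded[OF assms(5)] assms(6)
    by (intro eventually_subset_open_convex_if_PK_limsup_frontier[OF assms(1-3)])
      (simp_all add: liminf_frontier limsup_frontier)
  have "F \<subseteq> PK_liminf E"
    using PK_liminf_mono[of "\<lambda>n. frontier (E n)" E] frontier_subset_closed[OF E_closed]
      liminf_frontier by blast
  then have K_liminf: "K \<subseteq> PK_liminf E"
    unfolding K_def using convex_PK_liminf[OF assms(2)] by (rule hull_minimal)
  have "PK_converges E K"
    using K_liminf PK_liminf_subset_PK_limsup
      PK_limsup_subset_if_eventually_subset_open_convex[OF \<open>closed K\<close> \<open>convex K\<close> inside]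
    unfolding PK_converges_def by blast
  moreover have "F \<subseteq> frontier K"
    using PK_liminf_frontier_disjoint_interior_PK_liminf[of E, OF assms(2) E_closed]
      interior_mono[OF K_liminf] liminf_frontier \<open>F \<subseteq> K\<close> \<open>closed K\<close>
    by (auto simp: frontier_def)
  moreover have "frontier K \<subseteq> F"
    using frontier_subset_PK_liminf_frontier[OF \<open>closed K\<close> K_liminf
        eventually_not_mem_if_eventually_subset_open_convex[OF \<open>closed K\<close> \<open>convex K\<close> _ inside]]
      frontier_nonempty liminf_frontier by simp
  ultimately show ?thesis unfolding K_def by blast
qed

end
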